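(* Let $A$ be a circular $m\times n$ matrix and let $\Gamma$ be a circuit in $F(A)$ with winding number $p$. For each node $j\in[n]$ let $r(j)$ be the number of row arcs of $\Gamma$ that jump over $j$. Then $r(j)=p-1$ if $j\in\circ(\Gamma)$, $r(j)=p+1$ if $j\in\otimes(\Gamma)$, and $r(j)=p$ if $j\in\bullet(\Gamma)$.
   Context: Notation: $[n]=\{1,\dots,n\}$ with addition mod $n$ (index $0$ identified with $n$); for $a,c\in[n]$ with $t\ge0$ minimal such that $a+t\equiv c\pmod n$, $[a,c)_n=\{a,\dots,a+t-1\}$ (mod $n$). An $m\times n$ $\{0,1\}$-matrix $A$ is circular if for each row $i$ there are $\ell_i\in[n]$ and an integer $2\le k_i\le n-1$ with row $i$ the incidence vector of $[\ell_i,\ell_i+k_i)_n$. $F(A)$: digraph on $[n]$ (labels mod $n$) with row arcs $a_i=(\ell_i-1,\ell_i+k_i-1)$ ($i\in[m]$, length $k_i$), forward short arcs $(j-1,j)$ (length $1$) and reverse short arcs $(j,j-1)$ (length $-1$), $j\in[n]$. A circuit is a simple directed circuit; winding number $p(\Gamma)$: $p(\Gamma)n=$ sum of lengths of arcs of $\Gamma$. A row arc $a_i$ jumps over node $j$ iff $j\in[\ell_i,\ell_i+k_i)_n$. For a circuit $\Gamma$: $\circ(\Gamma)=\{j:(j-1,j)\in E(\Gamma)\}$, $\otimes(\Gamma)=\{j:(j,j-1)\in E(\Gamma)\}$, $\bullet(\Gamma)=[n]\setminus(\circ(\Gamma)\cup\otimes(\Gamma))$. *)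

theory Defs
  imports Main
begin

text \<open>Nodes/columns are the elements of [n] = {1..n}; an integer label x is reduced
  modulo n to the representative in {1..n} (so index 0 is identified with n).\<close>
definition nd :: "nat \<Rightarrow> int \<Rightarrow> nat" where
  "nd n x = nat ((x - 1) mod int n + 1)"

definition cint :: "nat \<Rightarrow> nat \<Rightarrow> nat \<Rightarrow> nat set" where
  "cint n a c = (let t = (LEAST t::nat. (int a + int t) mod int n = int c mod int n)
                 in {nd n (int a + int s) | s. s < t})"

definition circular_with :: "nat \<Rightarrow> nat \<Rightarrow> (nat \<Rightarrow> nat \<Rightarrow> int) \<Rightarrow> (nat \<Rightarrow> nat) \<Rightarrow> (nat \<Rightarrow> nat) \<Rightarrow> bool" where
  "circular_with m n A l k \<longleftrightarrow>
     (\<forall>i\<in>{1..m}. l i \<in> {1..n} \<and> 2 \<le> k i \<and> k i \<le> n - 1 \<and>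
        (\<forall>j\<in>{1..n}. A i j = (if j \<in> cint n (l i) (nd n (int (l i) + int (k i))) then 1 else 0)))"

definition circular :: "nat \<Rightarrow> nat \<Rightarrow> (nat \<Rightarrow> nat \<Rightarrow> int) \<Rightarrow> bool" where
  "circular m n A \<longleftrightarrow> (\<exists>l k. circular_with m n A l k)"

text \<open>Arcs of F(A) (a multigraph, so arcs are labelled): row arc a_i, forward short arc
  (j-1,j), reverse short arc (j,j-1).\<close>
datatype arc = RowArc nat | FwdArc nat | RevArc nat

fun arc_tail :: "nat \<Rightarrow> (nat \<Rightarrow> nat) \<Rightarrow> (nat \<Rightarrow> nat) \<Rightarrow> arc \<Rightarrow> nat" where
  "arc_tail n l k (RowArc i) = nd n (int (l i) - 1)"
| "arc_tail n l k (FwdArc j) = nd n (int j - 1)"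
| "arc_tail n l k (RevArc j) = nd n (int j)"

fun arc_head :: "nat \<Rightarrow> (nat \<Rightarrow> nat) \<Rightarrow> (nat \<Rightarrow> nat) \<Rightarrow> arc \<Rightarrow> nat" where
  "arc_head n l k (RowArc i) = nd n (int (l i) + int (k i) - 1)"
| "arc_head n l k (FwdArc j) = nd n (int j)"
| "arc_head n l k (RevArc j) = nd n (int j - 1)"

fun arc_len :: "(nat \<Rightarrow> nat) \<Rightarrow> arc \<Rightarrow> int" where
  "arc_len k (RowArc i) = int (k i)"
| "arc_len k (FwdArc j) = 1"
| "arc_len k (RevArc j) = -1"

definition F_arcs :: "nat \<Rightarrow> nat \<Rightarrow> arc set" where
  "F_arcs m n = RowArc ` {1..m} \<union> FwdArc ` {1..n} \<union> RevArc ` {1..n}"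

definition is_circuit :: "nat \<Rightarrow> nat \<Rightarrow> (nat \<Rightarrow> nat) \<Rightarrow> (nat \<Rightarrow> nat) \<Rightarrow> arc list \<Rightarrow> bool" where
  "is_circuit m n l k C \<longleftrightarrow>
     C \<noteq> [] \<and> set C \<subseteq> F_arcs m n \<and>
     (\<forall>i < length C. arc_head n l k (C ! i) = arc_tail n l k (C ! ((i + 1) mod length C))) \<and>
     distinct (map (arc_tail n l k) C)"

definition winding_number :: "nat \<Rightarrow> (nat \<Rightarrow> nat) \<Rightarrow> arc list \<Rightarrow> int \<Rightarrow> bool" where
  "winding_number n k C p \<longleftrightarrow> p * int n = sum_list (map (arc_len k) C)"

definition jumps_over :: "nat \<Rightarrow> (nat \<Rightarrow> nat) \<Rightarrow> (nat \<Rightarrow> nat) \<Rightarrow> nat \<Rightarrow> nat \<Rightarrow> bool" where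
  "jumps_over n l k i j \<longleftrightarrow> j \<in> cint n (l i) (nd n (int (l i) + int (k i)))"

definition circ_nodes :: "arc list \<Rightarrow> nat set" where
  "circ_nodes C = {j. FwdArc j \<in> set C}"

definition otimes_nodes :: "arc list \<Rightarrow> nat set" where
  "otimes_nodes C = {j. RevArc j \<in> set C}"

definition bullet_nodes :: "nat \<Rightarrow> arc list \<Rightarrow> nat set" where
  "bullet_nodes n C = {1..n} - (circ_nodes C \<union> otimes_nodes C)"

definition row_jumps :: "nat \<Rightarrow> (nat \<Rightarrow> nat) \<Rightarrow> (nat \<Rightarrow> nat) \<Rightarrow> arc list \<Rightarrow> nat \<Rightarrow> nat" where
  "row_jumps n l k C j = card {i. RowArc i \<in> set C \<and> jumps_over n l k i j}"

end

(* Lift the circuit to the integers, unrolling the n-cycle: every arc from t of length d becomes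
   the step from t to t + d, and the number of lifts of node j it passes is
   (t + d - j) div n - (t - j) div n. Around the circuit these counts telescope, up to the
   multiples of n picked up when reducing heads modulo n, to the winding number p. On the other
   hand a row arc passes j iff it jumps over j, the short arc (j-1, j) passes it forwards and
   (j, j-1) backwards; and both short arcs at j occur only in the excluded 2-circuit. *)

theory Submission
  imports Defs
begin

lemma div_add_diff_eq_has_multiple:
  fixes n d x :: int
  assumes n: "0 < n" and d: "0 \<le> d" "d \<le> n"
  shows "(x + d) div n - x div n = of_bool (\<exists>y. x < y \<and> y \<le> x + d \<and> n dvd y)"
proof -
  have below: "n * (z div n) \<le> z" and above: "z < n * (z div n + 1)" for z
    using n by (simp_all add: minus_mod_eq_mult_div [symmetric] distrib_left)
  have lo: "x div n \<le> (x + d) div n" using d by (simp add: zdiv_mono1 n)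
  have "(x + d) div n \<le> (x + n) div n" using d by (simp add: zdiv_mono1 n)
  also have "(x + n) div n = x div n + 1" using n by (metis div_add_self2 less_irrefl)
  finally have hi: "(x + d) div n \<le> x div n + 1" .
  have "(\<exists>y. x < y \<and> y \<le> x + d \<and> n dvd y) \<longleftrightarrow> x div n < (x + d) div n"
  proof
    assume "\<exists>y. x < y \<and> y \<le> x + d \<and> n dvd y"
    then obtain c where c: "x < n * c" "n * c \<le> x + d" by (auto elim!: dvdE)
    have "n * (x div n) < n * c" using below[of x] c(1) by linarith
    then have "x div n < c" using n by simp
    moreover have "n * c < n * ((x + d) div n + 1)" using above[of "x + d"] c(2) by linarith
    then have "c \<le> (x + d) div n" using n by simp
    ultimately show "x div n < (x + d) div n" by simp
  next
    assume "x div n < (x + d) div n"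
    then have "n * (x div n + 1) \<le> n * ((x + d) div n)" using n by simp
    then show "\<exists>y. x < y \<and> y \<le> x + d \<and> n dvd y"
      using above[of x] below[of "x + d"] by (intro exI[of _ "n * ((x + d) div n)"]) auto
  qed
  then show ?thesis using lo hi by auto
qed

lemma div_add_diff_eq_hits_residue:
  fixes n x j :: int and d :: nat
  assumes n: "0 < n" and d: "int d \<le> n"
  shows "(x + int d - j) div n - (x - j) div n = of_bool (\<exists>s<d. (x + 1 + int s) mod n = j mod n)"
proof -
  have "(\<exists>y. x - j < y \<and> y \<le> x - j + int d \<and> n dvd y) \<longleftrightarrow> (\<exists>s<d. n dvd (x + 1 + int s - j))"
  proof
    assume "\<exists>y. x - j < y \<and> y \<le> x - j + int d \<and> n dvd y"
    then obtain y where y: "x - j < y" "y \<le> x - j + int d" "n dvd y" by blast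
    then have "nat (y - x + j - 1) < d \<and> n dvd (x + 1 + int (nat (y - x + j - 1)) - j)" by auto
    then show "\<exists>s<d. n dvd (x + 1 + int s - j)" by blast
  next
    assume "\<exists>s<d. n dvd (x + 1 + int s - j)"
    then obtain s where "s < d" "n dvd (x + 1 + int s - j)" by blast
    then show "\<exists>y. x - j < y \<and> y \<le> x - j + int d \<and> n dvd y"
      by (intro exI[of _ "x + 1 + int s - j"]) auto
  qed
  then show ?thesis
    using div_add_diff_eq_has_multiple[OF n, of "int d" "x - j"] d
    by (simp add: mod_eq_dvd_iff algebra_simps)
qed

lemma mod_nd:
  assumes "0 < n"
  shows "int (nd n x) mod int n = x mod int n"
proof -
  have "int (nd n x) = (x - 1) mod int n + 1"
    unfolding nd_def using assms by simp
  then show ?thesis by (simp add: mod_add_left_eq)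
qed

lemma nd_eq_iff:
  assumes "j \<in> {1..n}"
  shows "nd n x = j \<longleftrightarrow> x mod int n = int j mod int n"
proof -
  have n: "0 < n" using assms by simp
  have "nd n x = j \<longleftrightarrow> (x - 1) mod int n = int j - 1"
    unfolding nd_def using n by auto
  also have "\<dots> \<longleftrightarrow> (x - 1) mod int n = (int j - 1) mod int n"
    using assms by (simp add: mod_pos_pos_trivial)
  also have "\<dots> \<longleftrightarrow> x mod int n = int j mod int n"
    by (metis diff_add_cancel mod_add_left_eq mod_diff_left_eq)
  finally show ?thesis .
qed

lemma nd_of_nat [simp]: "j \<in> {1..n} \<Longrightarrow> nd n (int j) = j"
  by (simp add: nd_eq_iff)

lemma residue_eq_iff_eq:
  "i \<in> {1..n} \<Longrightarrow> j \<in> {1..n} \<Longrightarrow> int i mod int n = int j mod int n \<longleftrightarrow> i = j"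
  by (metis nd_eq_iff nd_of_nat)

lemma cint_eq:
  assumes "0 < n" "k < n"
  shows "cint n a (nd n (int a + int k)) = {nd n (int a + int s) | s. s < k}"
proof -
  have "(LEAST t::nat. (int a + int t) mod int n = int (nd n (int a + int k)) mod int n) = k"
  proof (rule Least_equality)
    show "(int a + int k) mod int n = int (nd n (int a + int k)) mod int n"
      using mod_nd[OF assms(1)] by simp
  next
    fix t :: nat
    assume "(int a + int t) mod int n = int (nd n (int a + int k)) mod int n"
    then have "int n dvd (int k - int t)"
      using mod_nd[OF assms(1)] by (metis add_diff_cancel_left mod_eq_dvd_iff)
    then show "k \<le> t"
      using assms zdvd_imp_le[of "int n" "int k - int t"] by fastforce
  qed
  then show ?thesis unfolding cint_def by simp
qed

lemma jumps_over_iff: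
  assumes "k i < n" "j \<in> {1..n}"
  shows "jumps_over n l k i j \<longleftrightarrow> (\<exists>s<k i. (int (l i) + int s) mod int n = int j mod int n)"
proof -
  have n: "0 < n" using assms(2) by simp
  have "j = nd n x \<longleftrightarrow> x mod int n = int j mod int n" for x
    using nd_eq_iff[OF assms(2)] by metis
  then show ?thesis unfolding jumps_over_def cint_eq[OF n assms(1)] by auto
qed

lemma arc_tail_add_len_mod:
  assumes "0 < n"
  shows "(int (arc_tail n l k a) + arc_len k a) mod int n = int (arc_head n l k a) mod int n"
proof -
  have shift: "(int (nd n x) + d) mod int n = (x + d) mod int n" for x d
    by (metis mod_add_left_eq mod_nd[OF assms])
  show ?thesis
    using shift[of _ "-1"] by (cases a) (simp_all add: shift mod_nd[OF assms] diff_add_eq)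
qed

fun arc_crossing :: "nat \<Rightarrow> (nat \<Rightarrow> nat) \<Rightarrow> (nat \<Rightarrow> nat) \<Rightarrow> nat \<Rightarrow> arc \<Rightarrow> int" where
  "arc_crossing n l k j (RowArc i) = of_bool (jumps_over n l k i j)"
| "arc_crossing n l k j (FwdArc j') = of_bool (j' = j)"
| "arc_crossing n l k j (RevArc j') = - of_bool (j' = j)"

lemma arc_div_diff_eq_crossing:
  assumes A: "circular_with m n A l k" and a: "a \<in> F_arcs m n" and j: "j \<in> {1..n}"
  shows "(int (arc_tail n l k a) + arc_len k a - int j) div int n
           - (int (arc_tail n l k a) - int j) div int n = arc_crossing n l k j a"
proof -
  have n: "0 < n" and n': "0 < int n" using j by simp_all
  have tail: "int (arc_tail n l k a) mod int n = x mod int n \<Longrightarrow>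
      (int (arc_tail n l k a) + 1 + s) mod int n = (x + 1 + s) mod int n" for x s
    by (metis mod_add_left_eq)
  from a consider (row) i where "a = RowArc i" "i \<in> {1..m}"
    | (fwd) j' where "a = FwdArc j'" "j' \<in> {1..n}"
    | (rev) j' where "a = RevArc j'" "j' \<in> {1..n}"
    unfolding F_arcs_def by blast
  then show ?thesis
  proof cases
    case row
    have "k i < n" using A row(2) n unfolding circular_with_def by fastforce
    then show ?thesis
      using row div_add_diff_eq_hits_residue[OF n', of "k i"] tail[of "int (l i) - 1"]
      by (simp add: mod_nd[OF n] jumps_over_iff[OF _ j])
  next
    case fwd
    then have "(int (arc_tail n l k a) + 1) mod int n = int j' mod int n"
      using tail[of "int j' - 1" 0] by (simp add: mod_nd[OF n])
    with fwd show ?thesis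
      using div_add_diff_eq_hits_residue[OF n', of 1] by (simp add: residue_eq_iff_eq[OF _ j])
  next
    case rev
    then show ?thesis
      using div_add_diff_eq_hits_residue[OF n', of 1 "int j' - 1" "int j"]
      by (simp add: residue_eq_iff_eq[OF _ j])
  qed
qed

lemma circuit_heads_rotate1:
  assumes "is_circuit m n l k C"
  shows "map (arc_head n l k) C = rotate1 (map (arc_tail n l k) C)"
proof (rule nth_equalityI)
  fix i assume "i < length (map (arc_head n l k) C)"
  then have i: "i < length C" by simp
  then have "Suc i mod length C < length C" by (metis length_pos_if_in_set nth_mem mod_less_divisor)
  moreover have "arc_head n l k (C ! i) = arc_tail n l k (C ! (Suc i mod length C))"
    using assms i unfolding is_circuit_def by (metis Suc_eq_plus1)
  ultimately show "map (arc_head n l k) C ! i = rotate1 (map (arc_tail n l k) C) ! i"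
    using i by (simp add: nth_rotate1)
qed simp

lemma circuit_sum_heads_eq_sum_tails:
  fixes f :: "nat \<Rightarrow> 'a::comm_monoid_add"
  assumes "is_circuit m n l k C"
  shows "(\<Sum>a\<leftarrow>C. f (arc_head n l k a)) = (\<Sum>a\<leftarrow>C. f (arc_tail n l k a))"
proof -
  have "(\<Sum>a\<leftarrow>C. f (arc_head n l k a)) = sum_list (map f (map (arc_head n l k) C))"
    by (simp add: comp_def)
  also have "\<dots> = sum_list (map f (rotate1 (map (arc_tail n l k) C)))"
    unfolding circuit_heads_rotate1[OF assms] ..
  also have "\<dots> = sum_list (map f (map (arc_tail n l k) C))"
    by (cases "map (arc_tail n l k) C") (simp_all add: add.commute)
  finally show ?thesis by (simp add: comp_def)
qed

text \<open>(y - x) div n telescopes around the circuit, except for the multiples q a of n by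
  which the lifted arcs overshoot their heads; these add up to the winding number.\<close>
lemma circuit_sum_div_diff_eq_winding:
  assumes n: "0 < n" and C: "is_circuit m n l k C" and p: "winding_number n k C p"
  shows "(\<Sum>a\<leftarrow>C. (int (arc_tail n l k a) + arc_len k a - x) div int n
                   - (int (arc_tail n l k a) - x) div int n) = p"
proof -
  define T where "T a = int (arc_tail n l k a)" for a
  define H where "H a = int (arc_head n l k a)" for a
  define q where "q a = (T a + arc_len k a - H a) div int n" for a
  have lift: "T a + arc_len k a = H a + int n * q a" for a
    using arc_tail_add_len_mod[OF n, of l k a]
    unfolding q_def T_def H_def by (simp add: mod_eq_dvd_iff algebra_simps)
  have step: "(T a + arc_len k a - x) div int n - (T a - x) div int n
                = q a + ((H a - x) div int n - (T a - x) div int n)" for a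
  proof -
    have "T a + arc_len k a - x = (H a - x) + q a * int n" using lift by (simp add: algebra_simps)
    moreover have "((H a - x) + q a * int n) div int n = q a + (H a - x) div int n"
      using n by simp
    ultimately show ?thesis by (simp only:)
  qed
  have telescope: "(\<Sum>a\<leftarrow>C. (H a - x) div int n - (T a - x) div int n) = 0"
    using circuit_sum_heads_eq_sum_tails[OF C, of "\<lambda>y. (int y - x) div int n"]
    unfolding H_def T_def by (simp add: sum_list_subtractf)
  have "int n * (\<Sum>a\<leftarrow>C. q a) = (\<Sum>a\<leftarrow>C. arc_len k a + (T a - H a))"
    using lift by (simp add: sum_list_const_mult [symmetric] algebra_simps)
  also have "\<dots> = (\<Sum>a\<leftarrow>C. arc_len k a) + ((\<Sum>a\<leftarrow>C. T a) - (\<Sum>a\<leftarrow>C. H a))"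
    by (simp add: sum_list_addf sum_list_subtractf)
  also have "(\<Sum>a\<leftarrow>C. T a) = (\<Sum>a\<leftarrow>C. H a)"
    using circuit_sum_heads_eq_sum_tails[OF C, of int] unfolding H_def T_def by simp
  also have "(\<Sum>a\<leftarrow>C. arc_len k a) = int n * p"
    using p unfolding winding_number_def by (simp add: mult.commute)
  finally have "(\<Sum>a\<leftarrow>C. q a) = p" using n by simp
  then show ?thesis
    using telescope unfolding T_def[symmetric] by (simp add: step sum_list_addf)
qed

lemma sum_arc_crossing:
  assumes "distinct C"
  shows "(\<Sum>a\<leftarrow>C. arc_crossing n l k j a)
           = int (row_jumps n l k C j) + of_bool (j \<in> circ_nodes C) - of_bool (j \<in> otimes_nodes C)"
proof -
  define R where "R = RowArc ` {i. jumps_over n l k i j}"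
  have "arc_crossing n l k j a = of_bool (a \<in> R) + of_bool (a = FwdArc j) - of_bool (a = RevArc j)"
    for a unfolding R_def by (cases a) auto
  moreover have "(\<Sum>a\<in>set C. of_bool (a = b)) = (of_bool (b \<in> set C) :: int)" for b
    by (simp add: of_bool_def sum.delta)
  moreover have "(\<Sum>a\<in>set C. of_bool (a \<in> R)) = int (card (set C \<inter> R))"
    by simp
  ultimately have "(\<Sum>a\<leftarrow>C. arc_crossing n l k j a)
      = int (card (set C \<inter> R)) + of_bool (FwdArc j \<in> set C) - of_bool (RevArc j \<in> set C)"
    using assms by (simp add: sum_list_distinct_conv_sum_set sum.distrib sum_subtractf del: sum_of_bool_eq)
  also have "set C \<inter> R = RowArc ` {i. RowArc i \<in> set C \<and> jumps_over n l k i j}"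
    unfolding R_def by auto
  also have "card \<dots> = row_jumps n l k C j"
    unfolding row_jumps_def by (rule card_image) (simp add: inj_on_def)
  finally show ?thesis by (simp add: circ_nodes_def otimes_nodes_def)
qed

text \<open>FwdArc j and RevArc j run between the same two nodes in opposite directions, so in a
  circuit each must be followed by the other.\<close>
lemma circuit_fwd_rev_pair:
  assumes C: "is_circuit m n l k C"
    and fwd: "FwdArc j \<in> set C" and rev: "RevArc j \<in> set C"
  shows "set C = {FwdArc j, RevArc j}"
proof -
  define N where "N = length C"
  obtain a b where a: "a < N" "C ! a = FwdArc j" and b: "b < N" "C ! b = RevArc j"
    using fwd rev unfolding N_def by (metis in_set_conv_nth)
  have next_arc: "i < N \<Longrightarrow> arc_head n l k (C ! i) = arc_tail n l k (C ! ((i + 1) mod N))" for i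
    using C unfolding is_circuit_def N_def by blast
  have tail_inj: "x < N \<Longrightarrow> y < N \<Longrightarrow> arc_tail n l k (C ! x) = arc_tail n l k (C ! y) \<Longrightarrow> x = y"
    for x y using C unfolding is_circuit_def N_def by (metis length_map nth_eq_iff_index_eq nth_map)
  have N: "0 < N" using a(1) by simp
  have ab: "(a + 1) mod N = b"
  proof (rule tail_inj)
    show "arc_tail n l k (C ! ((a + 1) mod N)) = arc_tail n l k (C ! b)"
      using next_arc[OF a(1)] a(2) b(2) by simp
  qed (use N b(1) in simp_all)
  have ba: "(b + 1) mod N = a"
  proof (rule tail_inj)
    show "arc_tail n l k (C ! ((b + 1) mod N)) = arc_tail n l k (C ! a)"
      using next_arc[OF b(1)] a(2) b(2) by simp
  qed (use N a(1) in simp_all)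
  have "(a + 2) mod N = ((a + 1) mod N + 1) mod N" by (simp add: mod_Suc_eq)
  also have "\<dots> = a mod N" using ab ba a(1) by simp
  finally have "(a + 2) mod N = a mod N" .
  then have "N dvd 2" by (simp add: mod_eq_dvd_iff_nat)
  moreover have "a \<noteq> b" using a b by auto
  ultimately have "{0..<N} = {a, b}" using a(1) b(1) by (auto dest: dvd_imp_le)
  then show ?thesis
    using nth_image[of N C] a(2) b(2) unfolding N_def by simp
qed

theorem lemma6p1:
  fixes m n :: nat and A :: "nat \<Rightarrow> nat \<Rightarrow> int" and l k :: "nat \<Rightarrow> nat"
    and C :: "arc list" and p :: int
  assumes "circular_with m n A l k"
    and "is_circuit m n l k C"
    and "\<not> (\<exists>j. set C = {FwdArc j, RevArc j})"
    and "winding_number n k C p"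
  shows "\<forall>j\<in>{1..n}.
           (j \<in> circ_nodes C \<longrightarrow> int (row_jumps n l k C j) = p - 1) \<and>
           (j \<in> otimes_nodes C \<longrightarrow> int (row_jumps n l k C j) = p + 1) \<and>
           (j \<in> bullet_nodes n C \<longrightarrow> int (row_jumps n l k C j) = p)"
proof
  fix j assume j: "j \<in> {1..n}"
  then have n: "0 < n" by simp
  have arcs: "set C \<subseteq> F_arcs m n" and "distinct C"
    using assms(2) unfolding is_circuit_def by (auto simp: distinct_map)
  have "p = (\<Sum>a\<leftarrow>C. (int (arc_tail n l k a) + arc_len k a - int j) div int n
                     - (int (arc_tail n l k a) - int j) div int n)"
    using circuit_sum_div_diff_eq_winding[OF n assms(2,4)] by simp
  also have "\<dots> = (\<Sum>a\<leftarrow>C. arc_crossing n l k j a)"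
    using arcs by (auto intro!: arg_cong[where f = sum_list] arc_div_diff_eq_crossing[OF assms(1) _ j])
  also have "\<dots> = int (row_jumps n l k C j) + of_bool (j \<in> circ_nodes C) - of_bool (j \<in> otimes_nodes C)"
    using \<open>distinct C\<close> by (rule sum_arc_crossing)
  finally have p: "p = \<dots>" .
  have "\<not> (j \<in> circ_nodes C \<and> j \<in> otimes_nodes C)"
    using circuit_fwd_rev_pair[OF assms(2)] assms(3) unfolding circ_nodes_def otimes_nodes_def by blast
  then show "(j \<in> circ_nodes C \<longrightarrow> int (row_jumps n l k C j) = p - 1) \<and>
             (j \<in> otimes_nodes C \<longrightarrow> int (row_jumps n l k C j) = p + 1) \<and>
             (j \<in> bullet_nodes n C \<longrightarrow> int (row_jumps n l k C j) = p)"
    using p j unfolding bullet_nodes_def by auto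
qed

end
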